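(* Let $(X,Y)$ be a random vector with joint cumulative distribution function $H$, where $X$ and $Y$ take values in the non-negative integers, with zero-inflated marginal cdfs $F(s)=(1-\pi_F)+\pi_F\bar F(s)$ and $G(t)=(1-\pi_G)+\pi_G\bar G(t)$ for $s,t\ge 0$ (and $F(s)=G(t)=0$ for negative arguments), where $\bar F,\bar G$ are discrete distribution functions and $\pi_F,\pi_G\in[0,1]$. Let $(\tilde X_1,\tilde Y_1)$ and $(\tilde X_2,\tilde Y_2)$ be two independent copies of $(X,Y)$, and define Kendall's $\tau$ of $(X,Y)$ as $$\tau_A=\mathbb{P}[(\tilde X_1-\tilde X_2)(\tilde Y_1-\tilde Y_2)>0]-\mathbb{P}[(\tilde X_1-\tilde X_2)(\tilde Y_1-\tilde Y_2)<0].$$ Let $p_{00}=\mathbb{P}[X=0,Y=0]$, $p_{01}=\mathbb{P}[X=0,Y>0]$, $p_{10}=\mathbb{P}[X>0,Y=0]$, $p_{11}=\mathbb{P}[X>0,Y>0]$. Let $X_{10}$ and $X_{11}$ be independent random variables, with $X_{10}$ distributed as $X$ conditionally on $\{X>0,Y=0\}$ and $X_{11}$ distributed as $X$ conditionally on $\{X>0,Y>0\}$; let $Y_{01}$ and $Y_{11}$ be independent random variables, with $Y_{01}$ distributed as $Y$ conditionally on $\{X=0,Y>0\}$ and $Y_{11}$ distributed as $Y$ conditionally on $\{X>0,Y>0\}$. Set $p_1^{\ast}=\mathbb{P}[X_{10}>X_{11}]$, $p_2^{\ast}=\mathbb{P}[Y_{01}>Y_{11}]$, $p_1^{\dagger}=\mathbb{P}[X_{10}=X_{11}]$,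 $p_2^{\dagger}=\mathbb{P}[Y_{01}=Y_{11}]$, and let $\tau_{11}$ be Kendall's $\tau$ (probability of concordance minus probability of discordance of two independent copies) of the conditional distribution of $(X,Y)$ given $\{X>0,Y>0\}$. Then $$\tau_A=p_{11}^2\tau_{11}+2(p_{00}p_{11}-p_{01}p_{10})+2p_{11}\big[p_{10}(1-2p_1^{\ast}-p_1^{\dagger})+p_{01}(1-2p_2^{\ast}-p_2^{\dagger})\big].$$
   Context: Conditional quantities (such as $p_1^\ast,p_1^\dagger,\tau_{11}$) are only defined when the conditioning event has positive probability; when a conditioning event has probability zero, the term in which the corresponding quantity appears is multiplied by a zero probability and is interpreted as $0$. *)

theory Defs
  imports "HOL-Probability.Probability"
begin

definition kendall_tau :: "(nat \<times> nat) pmf \<Rightarrow> real" where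
  "kendall_tau q =
     measure_pmf.prob (pair_pmf q q)
       {((x1, y1), (x2, y2)). (int x1 - int x2) * (int y1 - int y2) > 0}
   - measure_pmf.prob (pair_pmf q q)
       {((x1, y1), (x2, y2)). (int x1 - int x2) * (int y1 - int y2) < 0}"

definition cdf_nat :: "nat pmf \<Rightarrow> nat \<Rightarrow> real" where
  "cdf_nat q s = measure_pmf.prob q {..s}"

end

(*
  Classify each of the two independent copies by the quadrant A00, A01, A10, A11 it falls in
  (according to which coordinates are zero). A pair is concordant iff one point is in A00 and
  the other in A11, or one point is on a positive half-axis and the other in A11 with the
  remaining coordinate increasing towards the A11 point, or both are in A11 and concordant;
  discordance is symmetric, with the A01-A10 pairs in place of the A00-A11 pairs. The probability
  of each such cell is the product of the two quadrant masses times a probability under the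
  conditional laws, which yields the terms with p11^2 tau11, p1*, p1-dagger, p2*, p2-dagger.
*)

theory Submission
  imports Defs
begin

lemma measure_pmf_prob_sum_list:
  assumes "\<And>z. indicator S z = (\<Sum>T\<leftarrow>Ts. indicator T z :: real)"
  shows "measure_pmf.prob p S = (\<Sum>T\<leftarrow>Ts. measure_pmf.prob p T)"
proof -
  have "integrable p (\<lambda>z. \<Sum>T\<leftarrow>Ts. indicator T z :: real)
      \<and> measure_pmf.expectation p (\<lambda>z. \<Sum>T\<leftarrow>Ts. indicator T z :: real)
          = (\<Sum>T\<leftarrow>Ts. measure_pmf.prob p T)"
    by (induction Ts) (auto simp: measure_pmf.emeasure_finite less_top[symmetric])
  moreover have "measure_pmf.prob p S
      = measure_pmf.expectation p (\<lambda>z. \<Sum>T\<leftarrow>Ts. indicator T z :: real)"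
    unfolding assms[symmetric] by simp
  ultimately show ?thesis
    by simp
qed

lemma measure_pair_pmf_swap:
  "measure_pmf.prob (pair_pmf p p) {(a, b). (b, a) \<in> S} = measure_pmf.prob (pair_pmf p p) S"
proof -
  have "{(a, b). (b, a) \<in> S} = (\<lambda>(x, y). (y, x)) -` S"
    by auto
  then show ?thesis
    by (subst (2) pair_commute_pmf) simp
qed

lemma measure_cond_pmf:
  assumes "set_pmf p \<inter> A \<noteq> {}"
  shows "measure_pmf.prob (cond_pmf p A) S = measure_pmf.prob p (A \<inter> S) / measure_pmf.prob p A"
  using assms measure_uniform_measure[of "measure_pmf p" A S] emeasure_measure_pmf_not_zero[of p A]
    measure_pmf.emeasure_finite[of p A]
  by (simp add: cond_pmf.rep_eq)

lemma pair_cond_pmf: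
  fixes p q :: "'a::countable pmf"
  assumes "set_pmf p \<inter> A \<noteq> {}" "set_pmf q \<inter> B \<noteq> {}"
  shows "pair_pmf (cond_pmf p A) (cond_pmf q B) = cond_pmf (pair_pmf p q) (A \<times> B)"
proof (rule pmf_eqI)
  fix z :: "'a \<times> 'a"
  obtain a b where z: "z = (a, b)"
    by fastforce
  have "set_pmf (pair_pmf p q) \<inter> (A \<times> B) \<noteq> {}"
    using assms by auto
  then show "pmf (pair_pmf (cond_pmf p A) (cond_pmf q B)) z = pmf (cond_pmf (pair_pmf p q) (A \<times> B)) z"
    using assms unfolding z by (simp add: pmf_pair pmf_cond measure_pmf_prob_product)
qed

text \<open>No positivity assumption is needed: if \<open>A\<close> or \<open>B\<close> is a null set,
  \<open>cond_pmf\<close> returns an unspecified distribution, but it is weighted by \<open>0\<close>.\<close>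

lemma measure_pair_pmf_Times_Int:
  fixes p q :: "'a::countable pmf"
  shows "measure_pmf.prob (pair_pmf p q) ((A \<times> B) \<inter> S)
     = measure_pmf.prob p A * measure_pmf.prob q B * measure_pmf.prob (pair_pmf (cond_pmf p A) (cond_pmf q B)) S"
proof (cases "measure_pmf.prob p A = 0 \<or> measure_pmf.prob q B = 0")
  case True
  have "measure_pmf.prob (pair_pmf p q) ((A \<times> B) \<inter> S) \<le> measure_pmf.prob (pair_pmf p q) (A \<times> B)"
    by (rule measure_pmf.finite_measure_mono) auto
  with True show ?thesis
    by (auto simp: measure_pmf_prob_product intro: antisym)
next
  case False
  then have ne: "set_pmf p \<inter> A \<noteq> {}" "set_pmf q \<inter> B \<noteq> {}"
    using measure_pmf_zero_iff by blast+
  then have ne_pair: "set_pmf (pair_pmf p q) \<inter> (A \<times> B) \<noteq> {}"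
    by auto
  with False show ?thesis
    unfolding pair_cond_pmf[OF ne] measure_cond_pmf[OF ne_pair]
    by (simp add: measure_pmf_prob_product)
qed

lemma measure_pair_pmf_Times_less_minus_greater:
  fixes p q :: "'a::countable pmf" and A B :: "'a set" and f :: "'a \<Rightarrow> 'c::linorder"
  defines "X \<equiv> map_pmf f (cond_pmf p A)" and "Y \<equiv> map_pmf f (cond_pmf q B)"
  shows "measure_pmf.prob (pair_pmf p q) ((A \<times> B) \<inter> {(u, v). f u < f v})
       - measure_pmf.prob (pair_pmf p q) ((A \<times> B) \<inter> {(u, v). f u > f v})
     = measure_pmf.prob p A * measure_pmf.prob q B
       * (1 - 2 * measure_pmf.prob (pair_pmf X Y) {(a, b). a > b}
            - measure_pmf.prob (pair_pmf X Y) {(a, b). a = b})"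
proof -
  have restrict: "measure_pmf.prob (pair_pmf p q) ((A \<times> B) \<inter> {(u, v). (f u, f v) \<in> R})
      = measure_pmf.prob p A * measure_pmf.prob q B * measure_pmf.prob (pair_pmf X Y) R" for R
  proof -
    have "{(u, v). (f u, f v) \<in> R} = (\<lambda>(u, v). (f u, f v)) -` R"
      by auto
    then show ?thesis
      unfolding measure_pair_pmf_Times_Int X_def Y_def map_pair[symmetric] by simp
  qed
  have "measure_pmf.prob (pair_pmf X Y) UNIV
      = (\<Sum>R\<leftarrow>[{(a, b). a < b}, {(a, b). a > b}, {(a, b). a = b}]. measure_pmf.prob (pair_pmf X Y) R)"
    by (rule measure_pmf_prob_sum_list) (auto simp: indicator_def)
  then have less: "measure_pmf.prob (pair_pmf X Y) {(a, b). a < b}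
      = 1 - measure_pmf.prob (pair_pmf X Y) {(a, b). a > b} - measure_pmf.prob (pair_pmf X Y) {(a, b). a = b}"
    by simp
  show ?thesis
    using restrict[of "{(a, b). a < b}"] restrict[of "{(a, b). a > b}"]
    by (simp add: less algebra_simps)
qed

lemma kendall_tau_quadrant_decomposition:
  fixes H :: "(nat \<times> nat) pmf"
  defines "A00 \<equiv> {(x, y). x = 0 \<and> y = 0}" and "A01 \<equiv> {(x, y). x = 0 \<and> y > 0}"
    and "A10 \<equiv> {(x, y). x > 0 \<and> y = 0}" and "A11 \<equiv> {(x, y). x > 0 \<and> y > 0}"
  defines "p00 \<equiv> measure_pmf.prob H A00" and "p01 \<equiv> measure_pmf.prob H A01"
    and "p10 \<equiv> measure_pmf.prob H A10" and "p11 \<equiv> measure_pmf.prob H A11"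
  defines "X \<equiv> pair_pmf (map_pmf fst (cond_pmf H A10)) (map_pmf fst (cond_pmf H A11))"
    and "Y \<equiv> pair_pmf (map_pmf snd (cond_pmf H A01)) (map_pmf snd (cond_pmf H A11))"
  shows "kendall_tau H =
           p11\<^sup>2 * kendall_tau (cond_pmf H A11) + 2 * (p00 * p11 - p01 * p10)
           + 2 * p11 * (p10 * (1 - 2 * measure_pmf.prob X {(a, b). a > b} - measure_pmf.prob X {(a, b). a = b})
                      + p01 * (1 - 2 * measure_pmf.prob Y {(a, b). a > b} - measure_pmf.prob Y {(a, b). a = b}))"
proof -
  define P where "P = pair_pmf H H"
  define Pos :: "((nat \<times> nat) \<times> (nat \<times> nat)) set"
    where "Pos = {((x1, y1), (x2, y2)). (int x1 - int x2) * (int y1 - int y2) > 0}"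
  define Neg :: "((nat \<times> nat) \<times> (nat \<times> nat)) set"
    where "Neg = {((x1, y1), (x2, y2)). (int x1 - int x2) * (int y1 - int y2) < 0}"
  define flip :: "((nat \<times> nat) \<times> (nat \<times> nat)) set \<Rightarrow> _"
    where "flip S = {(a, b). (b, a) \<in> S}" for S
  define Uless Ugreater Vless Vgreater
    where "Uless = (A01 \<times> A11) \<inter> {(u, v). snd u < snd v}"
      and "Ugreater = (A01 \<times> A11) \<inter> {(u, v). snd u > snd v}"
      and "Vless = (A10 \<times> A11) \<inter> {(u, v). fst u < fst v}"
      and "Vgreater = (A10 \<times> A11) \<inter> {(u, v). fst u > fst v}"
  have prob_flip: "measure_pmf.prob P (flip S) = measure_pmf.prob P S" for S
    unfolding flip_def P_def by (rule measure_pair_pmf_swap)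
  have prob_Times: "measure_pmf.prob P (A \<times> B) = measure_pmf.prob H A * measure_pmf.prob H B" for A B
    unfolding P_def by (simp add: measure_pmf_prob_product)
  have "measure_pmf.prob P Pos = (\<Sum>S\<leftarrow>[A00 \<times> A11, A11 \<times> A00, Uless, flip Uless, Vless, flip Vless,
      (A11 \<times> A11) \<inter> Pos]. measure_pmf.prob P S)"
    by (rule measure_pmf_prob_sum_list)
      (auto simp: split_paired_all indicator_def A00_def A01_def A10_def A11_def
         Uless_def Vless_def flip_def Pos_def zero_less_mult_iff)
  then have concordant: "measure_pmf.prob P Pos = 2 * p00 * p11 + 2 * measure_pmf.prob P Uless
      + 2 * measure_pmf.prob P Vless + measure_pmf.prob P ((A11 \<times> A11) \<inter> Pos)"
    by (simp add: prob_flip prob_Times p00_def p11_def)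
  have "measure_pmf.prob P Neg = (\<Sum>S\<leftarrow>[A01 \<times> A10, A10 \<times> A01, Ugreater, flip Ugreater, Vgreater,
      flip Vgreater, (A11 \<times> A11) \<inter> Neg]. measure_pmf.prob P S)"
    by (rule measure_pmf_prob_sum_list)
      (auto simp: split_paired_all indicator_def A00_def A01_def A10_def A11_def
         Ugreater_def Vgreater_def flip_def Neg_def mult_less_0_iff)
  then have discordant: "measure_pmf.prob P Neg = 2 * p01 * p10 + 2 * measure_pmf.prob P Ugreater
      + 2 * measure_pmf.prob P Vgreater + measure_pmf.prob P ((A11 \<times> A11) \<inter> Neg)"
    by (simp add: prob_flip prob_Times p01_def p10_def)
  have "measure_pmf.prob P Uless - measure_pmf.prob P Ugreater
      = p01 * p11 * (1 - 2 * measure_pmf.prob Y {(a, b). a > b} - measure_pmf.prob Y {(a, b). a = b})"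
    unfolding Uless_def Ugreater_def P_def p01_def p11_def Y_def
    by (rule measure_pair_pmf_Times_less_minus_greater)
  moreover have "measure_pmf.prob P Vless - measure_pmf.prob P Vgreater
      = p10 * p11 * (1 - 2 * measure_pmf.prob X {(a, b). a > b} - measure_pmf.prob X {(a, b). a = b})"
    unfolding Vless_def Vgreater_def P_def p10_def p11_def X_def
    by (rule measure_pair_pmf_Times_less_minus_greater)
  moreover have "measure_pmf.prob P ((A11 \<times> A11) \<inter> Pos) - measure_pmf.prob P ((A11 \<times> A11) \<inter> Neg)
      = p11\<^sup>2 * kendall_tau (cond_pmf H A11)"
    unfolding P_def measure_pair_pmf_Times_Int kendall_tau_def Pos_def Neg_def p11_def
    by (simp add: power2_eq_square right_diff_distrib)
  moreover have "kendall_tau H = measure_pmf.prob P Pos - measure_pmf.prob P Neg"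
    unfolding kendall_tau_def P_def Pos_def Neg_def ..
  ultimately show ?thesis
    unfolding concordant discordant by (simp add: algebra_simps)
qed

theorem theorem1:
  fixes H :: "(nat \<times> nat) pmf"
    and \<pi>F \<pi>G :: real
    and Fbar Gbar :: "nat pmf"
  assumes "0 \<le> \<pi>F" "\<pi>F \<le> 1" "0 \<le> \<pi>G" "\<pi>G \<le> 1"
    and "\<And>s. cdf_nat (map_pmf fst H) s = (1 - \<pi>F) + \<pi>F * cdf_nat Fbar s"
    and "\<And>t. cdf_nat (map_pmf snd H) t = (1 - \<pi>G) + \<pi>G * cdf_nat Gbar t"
  shows
   "let A00 = {(x, y). x = 0 \<and> y = 0};
        A01 = {(x, y). x = 0 \<and> y > 0};
        A10 = {(x, y). x > 0 \<and> y = 0};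
        A11 = {(x, y). x > 0 \<and> y > 0};
        p00 = measure_pmf.prob H A00;
        p01 = measure_pmf.prob H A01;
        p10 = measure_pmf.prob H A10;
        p11 = measure_pmf.prob H A11;
        X10 = map_pmf fst (cond_pmf H A10);
        X11 = map_pmf fst (cond_pmf H A11);
        Y01 = map_pmf snd (cond_pmf H A01);
        Y11 = map_pmf snd (cond_pmf H A11);
        p1s = measure_pmf.prob (pair_pmf X10 X11) {(a, b). a > b};
        p2s = measure_pmf.prob (pair_pmf Y01 Y11) {(a, b). a > b};
        p1d = measure_pmf.prob (pair_pmf X10 X11) {(a, b). a = b};
        p2d = measure_pmf.prob (pair_pmf Y01 Y11) {(a, b). a = b};
        tau11 = kendall_tau (cond_pmf H A11)
    in kendall_tau H =
         (if p11 = 0 then 0 else p11\<^sup>2 * tau11)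
         + 2 * (p00 * p11 - p01 * p10)
         + 2 * p11 * ((if p10 = 0 \<or> p11 = 0 then 0 else p10 * (1 - 2 * p1s - p1d))
                    + (if p01 = 0 \<or> p11 = 0 then 0 else p01 * (1 - 2 * p2s - p2d)))"
proof -
  txt \<open>The case distinctions only guard
    against undefined conditional distributions, whose terms carry a zero factor anyway.\<close>
  have drop_ifs:
    "(if c = 0 then 0 else c\<^sup>2 * t) = c\<^sup>2 * t"
    "2 * c * ((if b = 0 \<or> c = 0 then 0 else b * e) + (if d = 0 \<or> c = 0 then 0 else d * f))
       = 2 * c * (b * e + d * f)" for b c d e f t :: real
    by simp_all
  show ?thesis
    unfolding Let_def drop_ifs by (rule kendall_tau_quadrant_decomposition)
qed

end
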